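(* Let $q\neq-1$ be real and let $n,m\ge0$ be integers. Then $$\sum_{k=0}^{n}(-1)^kq^{\binom{k}{2}}\begin{bmatrix} n\\ k\end{bmatrix}\prod_{j=n+m+1-k}^{n+m}(1+q^j)\;U_{2n+m-1-k}(1,s,q)=q^{n^2-n+mn}s^n\,U_{m-1}(1,s,q).$$
   Context: $U_{-1}=0$, $U_0=1$, $U_n(x,s,q)=(1+q^{n})x\,U_{n-1}(x,s,q)+q^{n-1}s\,U_{n-2}(x,s,q)$ for $n\ge1$; $U_n(1,s,q)$ is its value at $x=1$. Notation: $[m]=1+q+\cdots+q^{m-1}$, $[m]!=[1]\cdots[m]$, $\begin{bmatrix} m\\ j\end{bmatrix}=\frac{[m]!}{[j]![m-j]!}$; empty products equal $1$. *)

theory Defs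
  imports Complex_Main
begin

text \<open>Shifted sequence: Ush n = U_(n-1), so Ush 0 = U_(-1) = 0, Ush 1 = U_0 = 1.\<close>
fun Ush :: "nat \<Rightarrow> real \<Rightarrow> real \<Rightarrow> real \<Rightarrow> real" where
  "Ush 0 x s q = 0"
| "Ush (Suc 0) x s q = 1"
| "Ush (Suc (Suc n)) x s q =
     (1 + q ^ (Suc n)) * x * Ush (Suc n) x s q + q ^ n * s * Ush n x s q"

text \<open>U_n(x,s,q) for integer n \<ge> -1 (value 0 for n < -1 is an irrelevant convention).\<close>
definition U :: "int \<Rightarrow> real \<Rightarrow> real \<Rightarrow> real \<Rightarrow> real" where
  "U n x s q = (if n < -1 then 0 else Ush (nat (n + 1)) x s q)"

definition qint :: "real \<Rightarrow> nat \<Rightarrow> real" where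
  "qint q m = (\<Sum>i<m. q ^ i)"

definition qfact :: "real \<Rightarrow> nat \<Rightarrow> real" where
  "qfact q m = (\<Prod>i=1..m. qint q i)"

definition qbinom :: "real \<Rightarrow> nat \<Rightarrow> nat \<Rightarrow> real" where
  "qbinom q m j = qfact q m / (qfact q j * qfact q (m - j))"

end

theory Submission
  imports Defs
begin

text \<open>
  Write \<open>T\<^sub>n(N, r) = \<Sum>\<^sub>k (-1)\<^sup>k q\<^bsup>k choose 2\<^esup> [n,k] (1+q\<^sup>N)\<cdots>(1+q\<^bsup>N-k+1\<^esup>) U\<^bsub>r-k-1\<^esub>\<close>,
  so that the left-hand side is \<open>T\<^sub>n(n+m, 2n+m)\<close>.  The q-Pascal rule together with the
  recurrence of \<open>U\<close> gives a three-term recurrence of \<open>T\<^sub>n\<^sub>+\<^sub>1(N, r)\<close> in \<open>r\<close>, and the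
  absorption identity \<open>[j+1] [p+1,j+1] = [p+1] [p,j]\<close> shows that raising \<open>N\<close> by one changes
  \<open>T\<^sub>p\<^sub>+\<^sub>1\<close> by a multiple of \<open>T\<^sub>p\<close>.  Combining the two, on the diagonal \<open>r = N + n\<close> the
  leading terms cancel and \<open>T\<^sub>n(N, N+n) = s q\<^bsup>N+n-2\<^esup> T\<^sub>n\<^sub>-\<^sub>1(N-1, N+n-2)\<close>; iterating
  \<open>n\<close> times reaches \<open>T\<^sub>0(m, m) = U\<^bsub>m-1\<^esub>\<close>.
\<close>

fun gauss_binom :: "real \<Rightarrow> nat \<Rightarrow> nat \<Rightarrow> real" where
  "gauss_binom q 0 0 = 1"
| "gauss_binom q 0 (Suc k) = 0"
| "gauss_binom q (Suc n) 0 = 1"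
| "gauss_binom q (Suc n) (Suc k) = gauss_binom q n k + q ^ Suc k * gauss_binom q n (Suc k)"

lemma gauss_binom_n_0 [simp]: "gauss_binom q n 0 = 1"
  by (cases n) auto

lemma gauss_binom_eq_0: "n < k \<Longrightarrow> gauss_binom q n k = 0"
proof (induction n arbitrary: k)
  case 0 then show ?case by (cases k) auto
next
  case (Suc n) then show ?case by (cases k) auto
qed

lemma qint_add: "qint q (a + b) = qint q a + q ^ a * qint q b"
  by (induction b) (simp_all add: qint_def power_add algebra_simps)

lemma qint_times_q_minus_1: "(q - 1) * qint q m = q ^ m - 1"
  by (induction m) (auto simp: qint_def algebra_simps)

lemma qfact_0 [simp]: "qfact q 0 = 1"
  by (simp add: qfact_def)

lemma qfact_Suc: "qfact q (Suc m) = qfact q m * qint q (Suc m)"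
  by (simp add: qfact_def prod.cl_ivl_Suc)

lemma qint_nonzero:
  assumes "q \<noteq> -1" "m > 0"
  shows "qint q m \<noteq> 0"
proof
  assume qint_0: "qint q m = 0"
  show False
  proof (cases "q = 1")
    case True
    then show False using qint_0 assms by (simp add: qint_def)
  next
    case False
    have "q ^ m = 1" using qint_times_q_minus_1[of q m] qint_0 by simp
    then have "\<bar>q\<bar> ^ m = 1" by (metis power_abs abs_one)
    then have "\<bar>q\<bar> = 1" using assms(2)
      by (metis abs_ge_zero power_eq_imp_eq_base power_one zero_le_one)
    then show False using False assms(1) by (auto simp: abs_if split: if_splits)
  qed
qed

lemma qfact_nonzero: "q \<noteq> -1 \<Longrightarrow> qfact q m \<noteq> 0"
  by (induction m) (auto simp: qfact_Suc qint_nonzero)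

lemma gauss_binom_qfact:
  "k \<le> n \<Longrightarrow> gauss_binom q n k * qfact q k * qfact q (n - k) = qfact q n"
proof (induction n arbitrary: k)
  case 0 then show ?case by simp
next
  case (Suc n)
  show ?case
  proof (cases k)
    case 0 then show ?thesis by simp
  next
    case (Suc j)
    then have "j \<le> n" using Suc.prems by simp
    have left: "gauss_binom q n j * qfact q (Suc j) * qfact q (n - j) = qint q (Suc j) * qfact q n"
      using Suc.IH[OF \<open>j \<le> n\<close>] by (simp add: qfact_Suc algebra_simps)
    have right: "gauss_binom q n (Suc j) * qfact q (Suc j) * qfact q (n - j) = qint q (n - j) * qfact q n"
    proof (cases "j < n")
      case True
      then have "qfact q (n - j) = qfact q (n - Suc j) * qint q (n - j)"
        by (metis Suc_diff_Suc qfact_Suc)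
      then show ?thesis using Suc.IH[of "Suc j"] True by (simp add: algebra_simps)
    next
      case False
      then show ?thesis using \<open>j \<le> n\<close> by (simp add: gauss_binom_eq_0 qint_def)
    qed
    have "gauss_binom q (Suc n) k * qfact q k * qfact q (Suc n - k)
        = gauss_binom q n j * qfact q (Suc j) * qfact q (n - j)
          + q ^ Suc j * (gauss_binom q n (Suc j) * qfact q (Suc j) * qfact q (n - j))"
      using Suc by (simp add: algebra_simps)
    also have "\<dots> = (qint q (Suc j) + q ^ Suc j * qint q (n - j)) * qfact q n"
      using left right by (simp add: algebra_simps)
    also have "\<dots> = qfact q (Suc n)"
      using qint_add[of q "Suc j" "n - j"] \<open>j \<le> n\<close> by (simp add: qfact_Suc)
    finally show ?thesis .
  qed
qed

lemma qbinom_eq_gauss_binom: "q \<noteq> -1 \<Longrightarrow> k \<le> n \<Longrightarrow> qbinom q n k = gauss_binom q n k"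
  using gauss_binom_qfact[of k n q] qfact_nonzero[of q]
  by (simp add: qbinom_def field_simps)

lemma gauss_binom_absorb:
  assumes "q \<noteq> -1"
  shows "(q ^ Suc j - 1) * gauss_binom q (Suc p) (Suc j) = (q ^ Suc p - 1) * gauss_binom q p j"
proof (cases "j \<le> p")
  case False then show ?thesis by (simp add: gauss_binom_eq_0)
next
  case True
  have "(q ^ Suc j - 1) * gauss_binom q (Suc p) (Suc j) * (qfact q j * qfact q (p - j))
      = (q - 1) * (gauss_binom q (Suc p) (Suc j) * qfact q (Suc j) * qfact q (Suc p - Suc j))"
    by (simp only: qfact_Suc diff_Suc_Suc flip: qint_times_q_minus_1) (simp add: mult_ac)
  also have "\<dots> = (q - 1) * qint q (Suc p) * qfact q p"
    using gauss_binom_qfact[of "Suc j" "Suc p" q] True by (simp add: qfact_Suc)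
  also have "\<dots> = (q ^ Suc p - 1) * qfact q p"
    by (simp only: qint_times_q_minus_1)
  also have "\<dots> = (q ^ Suc p - 1) * gauss_binom q p j * (qfact q j * qfact q (p - j))"
    using gauss_binom_qfact[of j p q] True by (simp add: ac_simps)
  finally show ?thesis using qfact_nonzero[OF assms] by simp
qed

definition top_prod :: "real \<Rightarrow> nat \<Rightarrow> nat \<Rightarrow> real" where
  "top_prod q N k = (\<Prod>i<k. 1 + q ^ (N - i))"

lemma top_prod_0 [simp]: "top_prod q N 0 = 1"
  by (simp add: top_prod_def)

lemma top_prod_Suc: "top_prod q N (Suc k) = top_prod q N k * (1 + q ^ (N - k))"
  by (simp add: top_prod_def)

lemma top_prod_Suc_Suc: "top_prod q (Suc N) (Suc k) = (1 + q ^ Suc N) * top_prod q N k"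
  unfolding top_prod_def by (subst prod.lessThan_Suc_shift) simp

lemma top_prod_Suc_diff:
  assumes "j \<le> N"
  shows "top_prod q (Suc N) (Suc j) - top_prod q N (Suc j) = q ^ (N - j) * (q ^ Suc j - 1) * top_prod q N j"
proof -
  have "top_prod q (Suc N) (Suc j) - top_prod q N (Suc j) = (q ^ Suc N - q ^ (N - j)) * top_prod q N j"
    unfolding top_prod_Suc_Suc top_prod_Suc[of q N j] by (simp add: algebra_simps)
  also have "q ^ Suc N = q ^ (N - j) * q ^ Suc j"
    using assms by (simp flip: power_add)
  finally show ?thesis by (simp add: algebra_simps)
qed

lemma prod_atLeastAtMost_top_eq_top_prod:
  "k \<le> N \<Longrightarrow> (\<Prod>j=N+1-k..N. 1 + q ^ j) = top_prod q N k"
proof (induction k)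
  case 0 then show ?case by (simp add: top_prod_def)
next
  case (Suc k)
  then have "{N + 1 - Suc k..N} = insert (N - k) {N + 1 - k..N}"
    and "N - k \<notin> {N + 1 - k..N}" by auto
  then show ?case using Suc by (simp add: top_prod_Suc mult.commute)
qed

lemma choose_two_Suc: "Suc k choose 2 = (k choose 2) + k"
  by (simp add: numeral_2_eq_2)

lemma Ush_recurrence_scaled:
  "q ^ k * (Ush (Suc (Suc t)) 1 s q - (1 + q ^ d) * Ush (Suc t) 1 s q)
     = (q ^ Suc (t + k) - q ^ (k + d)) * Ush (Suc t) 1 s q + s * q ^ (t + k) * Ush t 1 s q"
  by (simp add: power_add algebra_simps)

text \<open>\<open>alt_sum s q n N r\<close> is \<open>T\<^sub>n(N, r)\<close>.\<close>

definition alt_sum :: "real \<Rightarrow> real \<Rightarrow> nat \<Rightarrow> nat \<Rightarrow> nat \<Rightarrow> real" where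
  "alt_sum s q n N r =
     (\<Sum>k\<le>n. (-1) ^ k * q ^ (k choose 2) * gauss_binom q n k * top_prod q N k * Ush (r - k) 1 s q)"

lemma alt_sum_0 [simp]: "alt_sum s q 0 N r = Ush r 1 s q"
  by (simp add: alt_sum_def numeral_2_eq_2)

lemma sum_gauss_binom_Suc:
  "(\<Sum>k\<le>Suc n. f k * gauss_binom q (Suc n) k)
     = (\<Sum>k\<le>n. (f (Suc k) + q ^ k * f k) * gauss_binom q n k)"
proof -
  have "(\<Sum>k\<le>Suc n. f k * gauss_binom q (Suc n) k)
      = (\<Sum>k\<le>n. f (Suc k) * gauss_binom q n k)
        + (f 0 + (\<Sum>k\<le>n. q ^ Suc k * f (Suc k) * gauss_binom q n (Suc k)))"
    by (subst sum.atMost_Suc_shift) (simp add: sum.distrib algebra_simps)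
  also have "f 0 + (\<Sum>k\<le>n. q ^ Suc k * f (Suc k) * gauss_binom q n (Suc k))
      = (\<Sum>k\<le>Suc n. q ^ k * f k * gauss_binom q n k)"
    by (subst sum.atMost_Suc_shift) simp
  also have "\<dots> = (\<Sum>k\<le>n. q ^ k * f k * gauss_binom q n k)"
    by (simp add: gauss_binom_eq_0)
  finally show ?thesis by (simp add: sum.distrib algebra_simps)
qed

lemma alt_sum_Suc_recurrence:
  assumes "r \<ge> n + 2" "N \<ge> n"
  shows "alt_sum s q (Suc n) N r = (q ^ (r - 1) - q ^ N) * alt_sum s q n N (r - 1)
           + s * q ^ (r - 2) * alt_sum s q n N (r - 2)"
proof -
  define c where "c k = (-1) ^ k * q ^ (k choose 2) * gauss_binom q n k * top_prod q N k" for k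
  define u where "u j = Ush j 1 s q" for j
  define f where "f k = (-1) ^ k * q ^ (k choose 2) * top_prod q N k * u (r - k)" for k
  have "alt_sum s q (Suc n) N r = (\<Sum>k\<le>Suc n. f k * gauss_binom q (Suc n) k)"
    by (simp add: alt_sum_def f_def u_def mult_ac)
  also have "\<dots> = (\<Sum>k\<le>n. c k * (q ^ k * (u (r - k) - (1 + q ^ (N - k)) * u (r - Suc k))))"
    unfolding sum_gauss_binom_Suc f_def c_def choose_two_Suc top_prod_Suc power_add
    by (rule sum.cong) (simp_all add: algebra_simps)
  also have "\<dots> = (\<Sum>k\<le>n. (q ^ (r - 1) - q ^ N) * (c k * u (r - 1 - k))
                 + s * q ^ (r - 2) * (c k * u (r - 2 - k)))"
  proof (rule sum.cong)
    fix k assume "k \<in> {..n}"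
    with assms have "k + 2 \<le> r" "k \<le> N" by auto
    then obtain t d where r: "r = k + 2 + t" and N: "N = k + d" by (metis le_Suc_ex)
    have step: "q ^ k * (u (Suc (Suc t)) - (1 + q ^ d) * u (Suc t))
        = (q ^ Suc (t + k) - q ^ (k + d)) * u (Suc t) + s * q ^ (t + k) * u t"
      unfolding u_def by (rule Ush_recurrence_scaled)
    have indices: "r - k = Suc (Suc t)" "r - Suc k = Suc t" "N - k = d"
      "r - 1 - k = Suc t" "r - 2 - k = t" "r - 1 = Suc (t + k)" "r - 2 = t + k"
      using r N by auto
    have "c k * (q ^ k * (u (r - k) - (1 + q ^ (N - k)) * u (r - Suc k)))
        = c k * ((q ^ Suc (t + k) - q ^ (k + d)) * u (Suc t) + s * q ^ (t + k) * u t)"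
      by (simp only: indices step)
    also have "\<dots> = (q ^ (r - 1) - q ^ N) * (c k * u (r - 1 - k)) + s * q ^ (r - 2) * (c k * u (r - 2 - k))"
      unfolding indices N by (simp add: algebra_simps)
    finally show "c k * (q ^ k * (u (r - k) - (1 + q ^ (N - k)) * u (r - Suc k)))
        = (q ^ (r - 1) - q ^ N) * (c k * u (r - 1 - k)) + s * q ^ (r - 2) * (c k * u (r - 2 - k))" .
  qed simp
  also have "\<dots> = (q ^ (r - 1) - q ^ N) * alt_sum s q n N (r - 1)
           + s * q ^ (r - 2) * alt_sum s q n N (r - 2)"
    by (simp add: alt_sum_def c_def u_def sum.distrib sum_distrib_left mult_ac)
  finally show ?thesis .
qed

lemma alt_sum_Suc_top_diff:
  assumes "q \<noteq> -1" "Suc p \<le> N"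
  shows "alt_sum s q (Suc p) (Suc N) r - alt_sum s q (Suc p) N r
       = - (q ^ Suc p - 1) * q ^ N * alt_sum s q p N (r - 1)"
proof -
  define u where "u j = Ush j 1 s q" for j
  define a where "a p j = (-1) ^ j * q ^ (j choose 2) * gauss_binom q p j" for p j
  have "alt_sum s q (Suc p) (Suc N) r - alt_sum s q (Suc p) N r
      = (\<Sum>k\<le>Suc p. a (Suc p) k * (top_prod q (Suc N) k - top_prod q N k) * u (r - k))"
    by (simp add: alt_sum_def a_def u_def sum_subtractf algebra_simps)
  also have "\<dots> = (\<Sum>j\<le>p. a (Suc p) (Suc j) * (top_prod q (Suc N) (Suc j) - top_prod q N (Suc j))
                    * u (r - 1 - j))"
    by (subst sum.atMost_Suc_shift) simp
  also have "\<dots> = (\<Sum>j\<le>p. - (q ^ Suc p - 1) * q ^ N * (a p j * top_prod q N j * u (r - 1 - j)))"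
  proof (rule sum.cong)
    fix j assume "j \<in> {..p}"
    then obtain e where N: "N = j + e"
      using assms(2) by (metis atMost_iff le_Suc_eq le_iff_add le_trans)
    have "a (Suc p) (Suc j) * (q ^ Suc j - 1)
        = (-1) ^ Suc j * q ^ (j choose 2) * q ^ j * ((q ^ Suc j - 1) * gauss_binom q (Suc p) (Suc j))"
      by (simp add: a_def choose_two_Suc power_add mult_ac del: gauss_binom.simps)
    also have "\<dots> = - (q ^ j * (q ^ Suc p - 1) * a p j)"
      unfolding gauss_binom_absorb[OF assms(1)] by (simp add: a_def)
    finally have absorbed: "a (Suc p) (Suc j) * (q ^ Suc j - 1) = - (q ^ j * (q ^ Suc p - 1) * a p j)" .
    have "a (Suc p) (Suc j) * (top_prod q (Suc N) (Suc j) - top_prod q N (Suc j)) * u (r - 1 - j)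
        = q ^ e * (a (Suc p) (Suc j) * (q ^ Suc j - 1)) * top_prod q N j * u (r - 1 - j)"
      using top_prod_Suc_diff[of j N q] N by (simp add: mult_ac)
    also have "\<dots> = - (q ^ Suc p - 1) * q ^ N * (a p j * top_prod q N j * u (r - 1 - j))"
      unfolding absorbed N power_add by (simp add: algebra_simps)
    finally show "a (Suc p) (Suc j) * (top_prod q (Suc N) (Suc j) - top_prod q N (Suc j)) * u (r - 1 - j)
        = - (q ^ Suc p - 1) * q ^ N * (a p j * top_prod q N j * u (r - 1 - j))" .
  qed simp
  also have "\<dots> = - (q ^ Suc p - 1) * q ^ N * alt_sum s q p N (r - 1)"
    by (simp add: alt_sum_def a_def u_def sum_distrib_left mult_ac)
  finally show ?thesis .
qed

lemma alt_sum_diagonal: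
  assumes "q \<noteq> -1" "Suc n \<le> N"
  shows "alt_sum s q (Suc n) N (N + Suc n) = s * q ^ (N + n - 1) * alt_sum s q n (N - 1) (N + n - 1)"
  using assms(2)
proof (induction n arbitrary: N)
  case 0
  then show ?case using alt_sum_Suc_recurrence[of 0 "N + 1" N s q] by simp
next
  case (Suc p)
  then obtain M where N: "N = Suc M" by (cases N) auto
  define X where "X = alt_sum s q p M (M + p)"
  have "alt_sum s q (Suc (Suc p)) N (N + Suc (Suc p))
      = (q ^ (N + Suc p) - q ^ N) * alt_sum s q (Suc p) N (N + Suc p)
        + s * q ^ (N + p) * alt_sum s q (Suc p) N (N + p)"
    using alt_sum_Suc_recurrence[of "Suc p" "N + Suc (Suc p)" N s q] Suc.prems by simp
  also have "alt_sum s q (Suc p) N (N + Suc p) = s * q ^ (M + p) * X"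
    using Suc.IH[of N] Suc.prems N by (simp add: X_def)
  also have "alt_sum s q (Suc p) N (N + p) = alt_sum s q (Suc p) M (N + p) - (q ^ Suc p - 1) * q ^ M * X"
    using alt_sum_Suc_top_diff[OF assms(1), of p M s "N + p"] Suc.prems N
    by (simp add: X_def algebra_simps)
  also have "(q ^ (N + Suc p) - q ^ N) * (s * q ^ (M + p) * X)
      + s * q ^ (N + p) * (alt_sum s q (Suc p) M (N + p) - (q ^ Suc p - 1) * q ^ M * X)
      = s * q ^ (N + p) * alt_sum s q (Suc p) M (N + p)"
    unfolding N by (simp add: power_add algebra_simps)
  finally show ?case using N by simp
qed

lemma alt_sum_diagonal_iterated:
  assumes "q \<noteq> -1"
  shows "alt_sum s q n (n + m) (n + m + n) = q ^ (n\<^sup>2 - n + m * n) * s ^ n * Ush m 1 s q"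
proof (induction n)
  case 0 then show ?case by simp
next
  case (Suc n)
  have "alt_sum s q (Suc n) (Suc n + m) (Suc n + m + Suc n)
      = s * q ^ (n + m + n) * alt_sum s q n (n + m) (n + m + n)"
    using alt_sum_diagonal[OF assms, of n "Suc n + m" s] by simp
  also have "\<dots> = q ^ ((n + m + n) + (n\<^sup>2 - n + m * n)) * s ^ Suc n * Ush m 1 s q"
    using Suc.IH by (simp add: power_add algebra_simps)
  also have "(n + m + n) + (n\<^sup>2 - n + m * n) = (Suc n)\<^sup>2 - Suc n + m * Suc n"
    by (simp add: power2_eq_square algebra_simps) (use le_square[of n] in linarith)
  finally show ?case .
qed

lemma U_int_minus_1: "U (int j - 1) x s q = Ush j x s q"
  by (simp add: U_def)

lemma qbinom_U_sum_eq_alt_sum: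
  assumes "q \<noteq> -1" "n \<le> N" "n \<le> r"
  shows "(\<Sum>k=0..n. (-1) ^ k * q ^ (k choose 2) * qbinom q n k
            * (\<Prod>j=N+1-k..N. 1 + q ^ j) * U (int r - 1 - int k) 1 s q)
       = alt_sum s q n N r"
  unfolding alt_sum_def atLeast0AtMost
proof (rule sum.cong)
  fix k assume "k \<in> {..n}"
  with assms have "k \<le> n" "k \<le> N" and "int r - 1 - int k = int (r - k) - 1" by auto
  then show "(-1) ^ k * q ^ (k choose 2) * qbinom q n k
            * (\<Prod>j=N+1-k..N. 1 + q ^ j) * U (int r - 1 - int k) 1 s q
      = (-1) ^ k * q ^ (k choose 2) * gauss_binom q n k * top_prod q N k * Ush (r - k) 1 s q"
    by (simp only: U_int_minus_1 qbinom_eq_gauss_binom[OF assms(1)] prod_atLeastAtMost_top_eq_top_prod)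
qed simp

theorem theorem3p4:
  fixes q s :: real and n m :: nat
  assumes "q \<noteq> -1"
  shows "(\<Sum>k=0..n. (-1) ^ k * q ^ (k choose 2) * qbinom q n k
            * (\<Prod>j=n+m+1-k..n+m. 1 + q ^ j)
            * U (int (2*n+m) - 1 - int k) 1 s q)
         = q ^ (n^2 - n + m*n) * s ^ n * U (int m - 1) 1 s q"
proof -
  have "(\<Sum>k=0..n. (-1) ^ k * q ^ (k choose 2) * qbinom q n k
            * (\<Prod>j=n+m+1-k..n+m. 1 + q ^ j)
            * U (int (2*n+m) - 1 - int k) 1 s q) = alt_sum s q n (n + m) (2 * n + m)"
    by (rule qbinom_U_sum_eq_alt_sum) (use assms in auto)
  also have "\<dots> = alt_sum s q n (n + m) (n + m + n)"
    by (rule arg_cong[where f = "alt_sum s q n (n + m)"]) simp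
  also have "\<dots> = q ^ (n^2 - n + m*n) * s ^ n * U (int m - 1) 1 s q"
    by (simp add: alt_sum_diagonal_iterated[OF assms] U_int_minus_1)
  finally show ?thesis .
qed

end
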